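(* Let $(S,\mathcal{E}^Q)$ be a quantitative evidence frame with $\mathcal{E}^Q=\{(E_1,p_1),\dots,(E_k,p_k)\}$. Let $i:2^{\mathcal{E}}\to\tau_{\mathcal{E}}$ be given by $i(\emptyset)=S$ and $i(\mathbf{E})=\bigcap\mathbf{E}$ for $\mathbf{E}\neq\emptyset$, and let $\mathcal{J}_{DS}=\tau_{\mathcal{E}}\setminus\{\emptyset\}$. For $j=1,\dots,k$ let $m_j$ be the basic probability assignment on $S$ with $m_j(E_j)=p_j$, $m_j(S)=1-p_j$ (and $0$ elsewhere), let $m=m_1\oplus\cdots\oplus m_k$ be obtained by Dempster's rule of combination, and let $\mathrm{Bel}(P)=\sum_{A\subseteq P}m(A)$. Then $\mathrm{Bel}_{\mathcal{J}_{DS}}(i,P)=\mathrm{Bel}(P)$ for every $P\subseteq S$.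
   Context: A quantitative evidence frame is a pair $(S,\mathcal{E}^Q)$ where $S$ is a finite nonempty set and $\mathcal{E}^Q=\{(E_1,p_1),\dots,(E_k,p_k)\}$ with $E_1,\dots,E_k$ distinct, $p_j\in(0,1)$, and $\mathcal{E}=\{E_1,\dots,E_k\}$ a nonempty family of subsets of $S$ with $\emptyset\notin\mathcal{E}$, $S\notin\mathcal{E}$. $\tau_{\mathcal{E}}$ is the topology on $S$ generated by $\mathcal{E}$: $\emptyset$, $S$, all finite intersections of members of $\mathcal{E}$, and all unions of such. Define $\delta(\mathbf{E})=\prod_{E_j\in\mathbf{E}}p_j\prod_{E_j\notin\mathbf{E}}(1-p_j)$ for $\mathbf{E}\subseteq\mathcal{E}$; for $f:2^{\mathcal{E}}\to\tau_{\mathcal{E}}$, $\delta_\tau(f,T)=\sum_{\mathbf{E}\subseteq\mathcal{E}:\,f(\mathbf{E})=T}\delta(\mathbf{E})$ if $T\in\tau_{\mathcal{E}}$ and $0$ otherwise; for $\mathcal{J}\subseteq\tau_{\mathcal{E}}$, $\delta_{\mathcal{J}}(f,A)=\delta_\tau(f,A)/\sum_{T\in\mathcal{J}}\delta_\tau(f,T)$ if $A\in\mathcal{J}$ and $0$ otherwise; $\mathrm{Bel}_{\mathcal{J}}(f,P)=\sum_{A\subseteq P}\delta_{\mathcal{J}}(f,A)$. A basic probability assignment on $S$ is $m:2^S\to[0,1]$ with $m(\emptyset)=0$ and $\sum_{A\subseteq S}m(A)=1$. Dempster's rule: for basic probability assignments $m_1,m_2$ with $K=1-\sum_{A\cap B=\emptyset}m_1(A)m_2(B)>0$,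 $(m_1\oplus m_2)(\emptyset)=0$ and $(m_1\oplus m_2)(C)=\frac1K\sum_{A\cap B=C}m_1(A)m_2(B)$ for nonempty $C\subseteq S$; $m_1\oplus\cdots\oplus m_k$ is obtained by applying this rule successively. *)

theory Defs
  imports Complex_Main
begin

text \<open>Quantitative evidence frame: S finite nonempty; the evidence pieces are
  indexed as E 0, ..., E (k-1) with weights p 0, ..., p (k-1).\<close>
definition qef :: "'a set \<Rightarrow> nat \<Rightarrow> (nat \<Rightarrow> 'a set) \<Rightarrow> (nat \<Rightarrow> real) \<Rightarrow> bool" where
  "qef S k E p \<longleftrightarrow> finite S \<and> S \<noteq> {} \<and> k \<ge> 1 \<and> inj_on E {..<k} \<and>
     (\<forall>j<k. E j \<subseteq> S \<and> E j \<noteq> {} \<and> E j \<noteq> S \<and> 0 < p j \<and> p j < 1)"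

definition evfam :: "nat \<Rightarrow> (nat \<Rightarrow> 'a set) \<Rightarrow> 'a set set" where
  "evfam k E = E ` {..<k}"

definition gen_topology :: "'a set \<Rightarrow> 'a set set \<Rightarrow> 'a set set" where
  "gen_topology S Es = {{}, S} \<union>
     {\<Union> F | F. F \<subseteq> {\<Inter> G | G. finite G \<and> G \<noteq> {} \<and> G \<subseteq> Es}}"

definition delta :: "nat \<Rightarrow> (nat \<Rightarrow> 'a set) \<Rightarrow> (nat \<Rightarrow> real) \<Rightarrow> 'a set set \<Rightarrow> real" where
  "delta k E p B = (\<Prod>j<k. if E j \<in> B then p j else 1 - p j)"

definition delta_tau :: "'a set \<Rightarrow> nat \<Rightarrow> (nat \<Rightarrow> 'a set) \<Rightarrow> (nat \<Rightarrow> real)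
     \<Rightarrow> ('a set set \<Rightarrow> 'a set) \<Rightarrow> 'a set \<Rightarrow> real" where
  "delta_tau S k E p f T =
     (if T \<in> gen_topology S (evfam k E)
      then (\<Sum>B \<in> {B. B \<subseteq> evfam k E \<and> f B = T}. delta k E p B) else 0)"

definition delta_J :: "'a set \<Rightarrow> nat \<Rightarrow> (nat \<Rightarrow> 'a set) \<Rightarrow> (nat \<Rightarrow> real)
     \<Rightarrow> ('a set set \<Rightarrow> 'a set) \<Rightarrow> 'a set set \<Rightarrow> 'a set \<Rightarrow> real" where
  "delta_J S k E p f J A =
     (if A \<in> J then delta_tau S k E p f A / (\<Sum>T\<in>J. delta_tau S k E p f T) else 0)"

definition Bel_J :: "'a set \<Rightarrow> nat \<Rightarrow> (nat \<Rightarrow> 'a set) \<Rightarrow> (nat \<Rightarrow> real)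
     \<Rightarrow> ('a set set \<Rightarrow> 'a set) \<Rightarrow> 'a set set \<Rightarrow> 'a set \<Rightarrow> real" where
  "Bel_J S k E p f J P = (\<Sum>A \<in> Pow P. delta_J S k E p f J A)"

definition intersection_map :: "'a set \<Rightarrow> 'a set set \<Rightarrow> 'a set" where
  "intersection_map S B = (if B = {} then S else \<Inter> B)"

definition simple_bpa :: "'a set \<Rightarrow> 'a set \<Rightarrow> real \<Rightarrow> 'a set \<Rightarrow> real" where
  "simple_bpa S E p A = (if A = E then p else if A = S then 1 - p else 0)"

definition dempster :: "'a set \<Rightarrow> ('a set \<Rightarrow> real) \<Rightarrow> ('a set \<Rightarrow> real) \<Rightarrow> 'a set \<Rightarrow> real" where
  "dempster S m1 m2 C =
     (let K = 1 - (\<Sum>(A,B) \<in> {(A,B). A \<subseteq> S \<and> B \<subseteq> S \<and> A \<inter> B = {}}. m1 A * m2 B)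
      in if C = {} then 0
         else (\<Sum>(A,B) \<in> {(A,B). A \<subseteq> S \<and> B \<subseteq> S \<and> A \<inter> B = C}. m1 A * m2 B) / K)"

text \<open>Successive combination: dempster_comb S ms n = ms 0 \<oplus> ... \<oplus> ms n.\<close>
primrec dempster_comb :: "'a set \<Rightarrow> (nat \<Rightarrow> 'a set \<Rightarrow> real) \<Rightarrow> nat \<Rightarrow> 'a set \<Rightarrow> real" where
  "dempster_comb S ms 0 = ms 0"
| "dempster_comb S ms (Suc n) = dempster S (dempster_comb S ms n) (ms (Suc n))"

definition Bel :: "('a set \<Rightarrow> real) \<Rightarrow> 'a set \<Rightarrow> real" where
  "Bel m P = (\<Sum>A \<in> Pow P. m A)"

end

theory Submission
  imports Defs
begin

text \<open>Dempster's rule is the unnormalised conjunctive rule (products of masses are sent to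
  the intersection of their focal sets) followed by normalisation, i.e. conditioning on the
  complement of the conflict mass on the empty set. Since the conjunctive rule is bilinear, the
  normalisations may all be postponed to the very end. Combining the simple support functions
  conjunctively amounts to accepting each piece of evidence E j independently with probability
  p j and putting the mass on the intersection of the accepted pieces; because E is injective,
  this is exactly the mass delta_tau(i, C). Normalising it once is conditioning on the
  nonempty open sets, i.e. passing to delta_J for J = \<tau> - {\<emptyset>}.\<close>

definition conjunctive_comb :: "'a set \<Rightarrow> ('a set \<Rightarrow> real) \<Rightarrow> ('a set \<Rightarrow> real) \<Rightarrow> 'a set \<Rightarrow> real" where
  "conjunctive_comb S m1 m2 C =
     (\<Sum>(A,B) \<in> {(A,B). A \<subseteq> S \<and> B \<subseteq> S \<and> A \<inter> B = C}. m1 A * m2 B)"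

definition normalize_mass :: "('a set \<Rightarrow> real) \<Rightarrow> 'a set \<Rightarrow> real" where
  "normalize_mass u C = (if C = {} then 0 else u C / (1 - u {}))"

lemma dempster_eq_normalize_conjunctive_comb:
  "dempster S m1 m2 = normalize_mass (conjunctive_comb S m1 m2)"
  by (auto simp: dempster_def normalize_mass_def conjunctive_comb_def Let_def)

lemma conjunctive_comb_eq_double_sum:
  assumes "finite S"
  shows "conjunctive_comb S m1 m2 C =
    (\<Sum>A\<in>Pow S. \<Sum>B\<in>Pow S. if A \<inter> B = C then m1 A * m2 B else 0)"
proof -
  have "{(A,B). A \<subseteq> S \<and> B \<subseteq> S \<and> A \<inter> B = C} = {x \<in> Pow S \<times> Pow S. fst x \<inter> snd x = C}"
    by auto
  then show ?thesis
    unfolding conjunctive_comb_def using assms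
    by (simp add: sum.inter_filter sum.cartesian_product case_prod_beta)
qed

lemma conjunctive_comb_normalize_left:
  assumes "finite S" and "(\<Sum>B\<in>Pow S. m2 B) = 1"
  shows "conjunctive_comb S (normalize_mass u) m2 C =
    (conjunctive_comb S u m2 C - (if C = {} then u {} else 0)) / (1 - u {})"
proof -
  let ?Z = "1 - u {}"
  let ?X = "\<lambda>A B. if A \<inter> B = C then u A * m2 B else 0"
  let ?Y = "\<lambda>A B. if A = {} then if C = {} then u {} * m2 B else 0 else 0"
  have pointwise: "(if A \<inter> B = C then normalize_mass u A * m2 B else 0) = (?X A B - ?Y A B) / ?Z"
    for A B by (auto simp: normalize_mass_def)
  have "(\<Sum>A\<in>Pow S. \<Sum>B\<in>Pow S. ?Y A B) = (\<Sum>B\<in>Pow S. if C = {} then u {} * m2 B else 0)"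
    using assms(1) by (subst sum.swap) (simp add: sum.delta)
  also have "\<dots> = (if C = {} then u {} else 0)"
    using assms(2) by (simp add: sum_distrib_left[symmetric])
  finally have "(\<Sum>A\<in>Pow S. \<Sum>B\<in>Pow S. ?Y A B) = (if C = {} then u {} else 0)" .
  then show ?thesis
    using assms(1) unfolding conjunctive_comb_eq_double_sum[OF assms(1)] pointwise
    by (simp add: sum_divide_distrib[symmetric] sum_subtractf)
qed

lemma dempster_normalize_left:
  assumes "finite S" and "(\<Sum>B\<in>Pow S. m2 B) = 1" and "u {} \<noteq> 1"
  shows "dempster S (normalize_mass u) m2 = normalize_mass (conjunctive_comb S u m2)"
proof
  fix C
  let ?Z = "1 - u {}" and ?c = "conjunctive_comb S u m2"
  have "?Z \<noteq> 0" using assms(3) by simp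
  then have "1 - (?c {} - u {}) / ?Z = (1 - ?c {}) / ?Z"
    by (simp add: field_simps)
  then show "dempster S (normalize_mass u) m2 C = normalize_mass ?c C"
    using \<open>?Z \<noteq> 0\<close>
    unfolding dempster_eq_normalize_conjunctive_comb normalize_mass_def[of "conjunctive_comb _ _ _"]
      conjunctive_comb_normalize_left[OF assms(1,2)]
    by simp
qed

lemma simple_bpa_split:
  assumes "F \<noteq> S"
  shows "simple_bpa S F q B = (if B = F then q else 0) + (if B = S then 1 - q else 0)"
  using assms by (simp add: simple_bpa_def)

lemma sum_simple_bpa:
  assumes "finite S" and "F \<subseteq> S" and "F \<noteq> S"
  shows "(\<Sum>B\<in>Pow S. simple_bpa S F q B) = 1"
  using assms by (simp add: simple_bpa_split sum.distrib)

lemma conjunctive_comb_simple_bpa: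
  assumes "finite S" and "F \<subseteq> S" and "F \<noteq> S"
  shows "conjunctive_comb S u (simple_bpa S F q) C =
    q * (\<Sum>A\<in>Pow S. if A \<inter> F = C then u A else 0) + (1 - q) * (if C \<subseteq> S then u C else 0)"
proof -
  have "(\<Sum>B\<in>Pow S. if A \<inter> B = C then u A * simple_bpa S F q B else 0) =
      q * (if A \<inter> F = C then u A else 0) + (1 - q) * (if A = C then u A else 0)"
    if "A \<subseteq> S" for A
  proof -
    have "(\<Sum>B\<in>Pow S. if A \<inter> B = C then u A * simple_bpa S F q B else 0) =
        (\<Sum>B\<in>Pow S. (if B = F then q * (if A \<inter> F = C then u A else 0) else 0)
          + (if B = S then (1 - q) * (if A = C then u A else 0) else 0))"
      using assms(3) that by (intro sum.cong) (auto simp: simple_bpa_def Int_absorb2)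
    then show ?thesis
      using assms by (simp add: sum.distrib sum.delta)
  qed
  then show ?thesis
    using assms(1)
    by (simp add: conjunctive_comb_eq_double_sum sum.distrib sum.delta flip: sum_distrib_left)
qed

text \<open>Each piece E j is accepted independently with probability p j; selection_weight p n I is
  the probability that among the first n pieces exactly those indexed by I are accepted.\<close>
definition selection_weight :: "(nat \<Rightarrow> real) \<Rightarrow> nat \<Rightarrow> nat set \<Rightarrow> real" where
  "selection_weight p n I = (\<Prod>j\<in>I. p j) * (\<Prod>j\<in>{..<n} - I. 1 - p j)"

definition focal_set :: "'a set \<Rightarrow> (nat \<Rightarrow> 'a set) \<Rightarrow> nat set \<Rightarrow> 'a set" where
  "focal_set S E I = S \<inter> \<Inter>(E ` I)"

definition conjunctive_mass :: "'a set \<Rightarrow> (nat \<Rightarrow> 'a set) \<Rightarrow> (nat \<Rightarrow> real) \<Rightarrow> nat \<Rightarrow> 'a set \<Rightarrow> real" where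
  "conjunctive_mass S E p n C = (\<Sum>I \<in> {I \<in> Pow {..<n}. focal_set S E I = C}. selection_weight p n I)"

lemma sum_selection_weight: "(\<Sum>I\<in>Pow {..<n}. selection_weight p n I) = 1"
  using prod_add[of "{..<n}" p "\<lambda>j. 1 - p j"] by (simp add: selection_weight_def)

lemma selection_weight_nonneg:
  assumes "\<forall>j<n. 0 \<le> p j \<and> p j \<le> 1" and "I \<subseteq> {..<n}"
  shows "0 \<le> selection_weight p n I"
  using assms unfolding selection_weight_def
  by (intro mult_nonneg_nonneg prod_nonneg) auto

lemma selection_weight_Suc:
  assumes "I \<subseteq> {..<n}"
  shows "selection_weight p (Suc n) I = (1 - p n) * selection_weight p n I"
    and "selection_weight p (Suc n) (insert n I) = p n * selection_weight p n I"
proof -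
  have "n \<notin> I" and "finite I" and "{..<Suc n} - I = insert n ({..<n} - I)"
    and "{..<Suc n} - insert n I = {..<n} - I"
    using assms by (auto intro: finite_subset)
  then show "selection_weight p (Suc n) I = (1 - p n) * selection_weight p n I"
    and "selection_weight p (Suc n) (insert n I) = p n * selection_weight p n I"
    by (simp_all add: selection_weight_def)
qed

lemma conjunctive_mass_eq_0:
  assumes "C \<notin> focal_set S E ` Pow {..<n}"
  shows "conjunctive_mass S E p n C = 0"
  using assms unfolding conjunctive_mass_def by (intro sum.neutral) auto

lemma focal_set_subset: "focal_set S E I \<subseteq> S"
  by (auto simp: focal_set_def)

lemma focal_set_insert: "focal_set S E (insert n I) = focal_set S E I \<inter> E n"
  by (auto simp: focal_set_def)

lemma sum_conjunctive_mass_if: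
  assumes "finite S"
  shows "(\<Sum>A\<in>Pow S. if Q A then conjunctive_mass S E p n A else 0) =
    (\<Sum>I \<in> {I \<in> Pow {..<n}. Q (focal_set S E I)}. selection_weight p n I)"
proof -
  let ?h = "\<lambda>I. if Q (focal_set S E I) then selection_weight p n I else 0"
  have "(\<Sum>A\<in>Pow S. if Q A then conjunctive_mass S E p n A else 0) =
      (\<Sum>A\<in>Pow S. \<Sum>I \<in> {I \<in> Pow {..<n}. focal_set S E I = A}. ?h I)"
    unfolding conjunctive_mass_def by (intro sum.cong) auto
  also have "\<dots> = (\<Sum>I\<in>Pow {..<n}. ?h I)"
    using assms by (intro sum.group) (auto simp: focal_set_def)
  finally show ?thesis
    using sum.inter_filter[of "Pow {..<n}" "selection_weight p n" "\<lambda>I. Q (focal_set S E I)"]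
    by simp
qed

lemma sum_conjunctive_mass:
  assumes "finite S"
  shows "(\<Sum>C\<in>Pow S. conjunctive_mass S E p n C) = 1"
  using sum_conjunctive_mass_if[OF assms, of "\<lambda>_. True"] sum_selection_weight
  by (simp del: Pow_iff)

lemma conjunctive_mass_Suc:
  assumes "finite S" and "E n \<subseteq> S" and "E n \<noteq> S"
  shows "conjunctive_mass S E p (Suc n) =
    conjunctive_comb S (conjunctive_mass S E p n) (simple_bpa S (E n) (p n))"
proof
  fix C
  let ?keep = "{I \<in> Pow {..<n}. focal_set S E I = C}"
  let ?add = "{I \<in> Pow {..<n}. focal_set S E I \<inter> E n = C}"
  have split: "{I \<in> Pow {..<Suc n}. focal_set S E I = C} = ?keep \<union> insert n ` ?add"
    unfolding lessThan_Suc Pow_insert by (auto simp: focal_set_insert)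
  have outside: "\<not> C \<subseteq> S \<Longrightarrow> conjunctive_mass S E p n C = 0"
    by (metis conjunctive_mass_eq_0 focal_set_subset imageE)
  have "inj_on (insert n) ?add"
    by (auto simp: inj_on_def)
  moreover have "?keep \<inter> insert n ` ?add = {}"
    by auto
  ultimately have "conjunctive_mass S E p (Suc n) C =
      (\<Sum>I\<in>?keep. selection_weight p (Suc n) I) + (\<Sum>I\<in>?add. selection_weight p (Suc n) (insert n I))"
    unfolding conjunctive_mass_def split by (simp add: sum.union_disjoint sum.reindex)
  also have "\<dots> = (1 - p n) * conjunctive_mass S E p n C + p n * (\<Sum>I\<in>?add. selection_weight p n I)"
    unfolding conjunctive_mass_def sum_distrib_left by (simp add: selection_weight_Suc)
  also have "\<dots> = conjunctive_comb S (conjunctive_mass S E p n) (simple_bpa S (E n) (p n)) C"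
    using outside
    by (simp add: conjunctive_comb_simple_bpa[OF assms] sum_conjunctive_mass_if[OF assms(1)])
  finally show "conjunctive_mass S E p (Suc n) C =
    conjunctive_comb S (conjunctive_mass S E p n) (simple_bpa S (E n) (p n)) C" .
qed

lemma conjunctive_mass_empty_less_one:
  assumes "S \<noteq> {}" and "\<forall>j<n. 0 \<le> p j \<and> p j < 1"
  shows "conjunctive_mass S E p n {} < 1"
proof -
  have "conjunctive_mass S E p n {} \<le> (\<Sum>I \<in> Pow {..<n} - {{}}. selection_weight p n I)"
    unfolding conjunctive_mass_def using assms
    by (intro sum_mono2) (auto simp: focal_set_def intro!: selection_weight_nonneg)
  also have "\<dots> = 1 - selection_weight p n {}"
    by (simp add: sum_diff1 sum_selection_weight)
  also have "\<dots> < 1"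
    using assms(2) unfolding selection_weight_def by (auto intro!: prod_pos)
  finally show ?thesis .
qed

lemma conjunctive_mass_one:
  assumes "E 0 \<subseteq> S" and "E 0 \<noteq> S"
  shows "conjunctive_mass S E p 1 = simple_bpa S (E 0) (p 0)"
proof
  fix C
  have "Pow {..<1::nat} = {{}, {0}}"
    by (auto simp: lessThan_Suc)
  then have "conjunctive_mass S E p 1 C =
      (\<Sum>I\<in>{{}, {0}}. if focal_set S E I = C then selection_weight p 1 I else 0)"
    unfolding conjunctive_mass_def by (simp only: sum.inter_filter finite.intros)
  also have "\<dots> = (if S = C then 1 - p 0 else 0) + (if S \<inter> E 0 = C then p 0 else 0)"
    using assms by (auto simp: selection_weight_def focal_set_def lessThan_Suc)
  finally show "conjunctive_mass S E p 1 C = simple_bpa S (E 0) (p 0) C"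
    using assms by (auto simp: simple_bpa_def Int_absorb1)
qed

lemma dempster_comb_simple_bpa:
  assumes "finite S" and "S \<noteq> {}"
    and "\<forall>j<Suc n. E j \<subseteq> S \<and> E j \<noteq> {} \<and> E j \<noteq> S \<and> 0 \<le> p j \<and> p j < 1"
  shows "dempster_comb S (\<lambda>j. simple_bpa S (E j) (p j)) n = normalize_mass (conjunctive_mass S E p (Suc n))"
  using assms(3)
proof (induction n)
  case 0
  then have "E 0 \<subseteq> S" and "E 0 \<noteq> {}" and "E 0 \<noteq> S"
    by auto
  then have "conjunctive_mass S E p (Suc 0) = simple_bpa S (E 0) (p 0)"
    and "simple_bpa S (E 0) (p 0) {} = 0"
    using assms(2) conjunctive_mass_one by (auto simp: simple_bpa_def)
  then show ?case
    by (auto simp: normalize_mass_def)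
next
  case (Suc n)
  then have E: "E (Suc n) \<subseteq> S" "E (Suc n) \<noteq> S" and p: "\<forall>j<Suc n. 0 \<le> p j \<and> p j < 1"
    by auto
  have "conjunctive_mass S E p (Suc n) {} \<noteq> 1"
    using conjunctive_mass_empty_less_one[OF assms(2) p, of E] by simp
  have "dempster_comb S (\<lambda>j. simple_bpa S (E j) (p j)) (Suc n) =
      dempster S (normalize_mass (conjunctive_mass S E p (Suc n))) (simple_bpa S (E (Suc n)) (p (Suc n)))"
    using Suc by simp
  also have "\<dots> = normalize_mass
      (conjunctive_comb S (conjunctive_mass S E p (Suc n)) (simple_bpa S (E (Suc n)) (p (Suc n))))"
    by (rule dempster_normalize_left[OF assms(1) sum_simple_bpa[OF assms(1) E]]) fact
  also have "\<dots> = normalize_mass (conjunctive_mass S E p (Suc (Suc n)))"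
    using conjunctive_mass_Suc[of S E "Suc n" p] assms(1) E by simp
  finally show ?case .
qed

lemma gen_topology_subset_Pow:
  assumes "Es \<subseteq> Pow S"
  shows "gen_topology S Es \<subseteq> Pow S"
  using assms unfolding gen_topology_def by blast

lemma Inter_in_gen_topology:
  assumes "finite G" and "G \<noteq> {}" and "G \<subseteq> Es"
  shows "\<Inter>G \<in> gen_topology S Es"
proof -
  have "\<Union>{\<Inter>G} \<in> {\<Union>F | F. F \<subseteq> {\<Inter>G | G. finite G \<and> G \<noteq> {} \<and> G \<subseteq> Es}}"
    using assms by blast
  then show ?thesis
    unfolding gen_topology_def by simp
qed

lemma focal_set_in_gen_topology:
  assumes "E ` {..<k} \<subseteq> Pow S" and "I \<subseteq> {..<k}"
  shows "focal_set S E I \<in> gen_topology S (evfam k E)"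
proof (cases "I = {}")
  case True
  then show ?thesis by (simp add: focal_set_def gen_topology_def)
next
  case False
  then have "focal_set S E I = \<Inter>(E ` I)"
    using assms by (auto simp: focal_set_def)
  moreover have "\<Inter>(E ` I) \<in> gen_topology S (evfam k E)"
    using assms False finite_subset[OF assms(2)]
    by (intro Inter_in_gen_topology) (auto simp: evfam_def)
  ultimately show ?thesis by simp
qed

lemma intersection_map_image:
  assumes "E ` I \<subseteq> Pow S"
  shows "intersection_map S (E ` I) = focal_set S E I"
  using assms by (auto simp: intersection_map_def focal_set_def)

lemma delta_image:
  assumes "inj_on E {..<k}" and "I \<subseteq> {..<k}"
  shows "delta k E p (E ` I) = selection_weight p k I"
proof -
  have "delta k E p (E ` I) = (\<Prod>j<k. if j \<in> I then p j else 1 - p j)"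
    unfolding delta_def using assms by (intro prod.cong) (auto simp: inj_on_def)
  also have "\<dots> = selection_weight p k I"
  proof -
    have "{..<k} \<inter> {j. j \<in> I} = I" and "{..<k} \<inter> - {j. j \<in> I} = {..<k} - I"
      using assms(2) by auto
    then show ?thesis
      by (simp add: prod.If_cases selection_weight_def)
  qed
  finally show ?thesis .
qed

lemma delta_tau_intersection_map:
  assumes "qef S k E p"
  shows "delta_tau S k E p (intersection_map S) = conjunctive_mass S E p k"
proof
  fix T
  have inj: "inj_on E {..<k}" and ES: "E ` {..<k} \<subseteq> Pow S"
    using assms by (auto simp: qef_def)
  show "delta_tau S k E p (intersection_map S) T = conjunctive_mass S E p k T"
  proof (cases "T \<in> gen_topology S (evfam k E)")
    case True
    have "intersection_map S (E ` I) = focal_set S E I" if "I \<subseteq> {..<k}" for I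
      using ES that by (intro intersection_map_image) auto
    then have "{B. B \<subseteq> evfam k E \<and> intersection_map S B = T} =
        image E ` {I \<in> Pow {..<k}. focal_set S E I = T}"
      by (fastforce simp: evfam_def subset_image_iff)
    moreover have "inj_on (image E) {I \<in> Pow {..<k}. focal_set S E I = T}"
      using inj_on_image_Pow[OF inj] by (rule inj_on_subset) auto
    ultimately show ?thesis
      using True inj by (simp add: delta_tau_def conjunctive_mass_def sum.reindex delta_image)
  next
    case False
    then have "T \<notin> focal_set S E ` Pow {..<k}"
      using focal_set_in_gen_topology[OF ES] by auto
    then show ?thesis
      using False by (simp add: delta_tau_def conjunctive_mass_eq_0)
  qed
qed

lemma delta_J_intersection_map:
  assumes "qef S k E p"
  shows "delta_J S k E p (intersection_map S) (gen_topology S (evfam k E) - {{}}) =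
    normalize_mass (conjunctive_mass S E p k)"
proof
  fix A
  let ?top = "gen_topology S (evfam k E)" and ?m = "conjunctive_mass S E p k"
  have "finite S" and ES: "E ` {..<k} \<subseteq> Pow S"
    using assms by (auto simp: qef_def)
  have vanish: "?m T = 0" if "T \<notin> ?top" for T
    using that focal_set_in_gen_topology[OF ES] by (intro conjunctive_mass_eq_0) auto
  have "?top \<subseteq> Pow S"
    using ES by (intro gen_topology_subset_Pow) (auto simp: evfam_def)
  then have "(\<Sum>T \<in> ?top - {{}}. ?m T) = (\<Sum>T \<in> Pow S - {{}}. ?m T)"
    using \<open>finite S\<close> vanish by (intro sum.mono_neutral_left) auto
  also have "\<dots> = 1 - ?m {}"
    using \<open>finite S\<close> by (simp add: sum_diff1 sum_conjunctive_mass)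
  finally have "(\<Sum>T \<in> ?top - {{}}. ?m T) = 1 - ?m {}" .
  then show "delta_J S k E p (intersection_map S) (?top - {{}}) A = normalize_mass ?m A"
    using vanish[of A]
    by (auto simp: delta_J_def delta_tau_intersection_map[OF assms] normalize_mass_def)
qed

theorem proposition5:
  fixes S :: "'a set" and k :: nat and E :: "nat \<Rightarrow> 'a set" and p :: "nat \<Rightarrow> real"
    and P :: "'a set"
  assumes "qef S k E p"
    and "P \<subseteq> S"
  shows "Bel_J S k E p (intersection_map S) (gen_topology S (evfam k E) - {{}}) P
       = Bel (dempster_comb S (\<lambda>j. simple_bpa S (E j) (p j)) (k - 1)) P"
proof -
  have k: "Suc (k - 1) = k"
    and frame: "finite S" "S \<noteq> {}"
      "\<forall>j<Suc (k - 1). E j \<subseteq> S \<and> E j \<noteq> {} \<and> E j \<noteq> S \<and> 0 \<le> p j \<and> p j < 1"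
    using assms(1) by (auto simp: qef_def)
  have "dempster_comb S (\<lambda>j. simple_bpa S (E j) (p j)) (k - 1) =
      normalize_mass (conjunctive_mass S E p k)"
    using dempster_comb_simple_bpa[OF frame] by (simp only: k)
  then show ?thesis
    unfolding Bel_J_def Bel_def delta_J_intersection_map[OF assms(1)] by simp
qed

end
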